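(* Let $T$ be a negative subset and $W$ a positive subset of $\mathbb{N}^2$. If a nonvanishing nonempty finite multiset $U$ on $\mathbb{N}^2$ is bounded by $T,W$, then $\mathrm{BRSK}(U)$ is bounded by $T,W$.
   Context: $\mathbb{N}$ = positive integers. For a finite multiset $U$ on $\mathbb{N}^2$, $U_{(1)}$ and $U_{(2)}$ are the multisets of first and second coordinates; $U$ is negative/positive/nonvanishing if each element $(a,b)$ has $a<b$ / $a>b$ / $a\neq b$; $U^-$, $U^+$ are the negative and positive sub-multisets; $\iota$ swaps coordinates. For equal-size finite multisets of $\mathbb{N}$, $A\le B$ iff the sorted entries satisfy $a_i\le b_i$; $A\lessdot B$ iff $A,B$ nonempty and $a_i<b_i$. For finite multisets with $|A|+|D|=|B|+|C|$, "$A-C\le B-D$" means $A\sqcup D\le B\sqcup C$. For multisets $U,V$ on $\mathbb{N}^2$, $U\le V$ means $U_{(1)}-U_{(2)}\le V_{(1)}-V_{(2)}$. A chain is a subset $\{(e_1,f_1),\dots,(e_m,f_m)\}$ of $\mathbb{N}^2$ with $e_1<\dots<e_m$ and $f_1>\dots>f_m$. A nonempty multiset $U$ on $\mathbb{N}^2$ is bounded by $T,W$ if $T\le C\le W$ for every chain $C$ contained in the underlying set of $U$. A semistandard notched bitableau $(P,Q)$ with rows $P_1,\dots,P_r$, $Q_1,\dots,Q_r$ is bounded by $T,W$ if $T_{(1)}-T_{(2)}\le P_1-Q_1$ and $P_r-Q_r\le W_{(1)}-W_{(2)}$. Notched tableau: finite sequence of left-justified, possibly empty rows of positive integers; row strict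 if rows strictly increase (rows identified with entry sets). Notched bitableau: two notched tableaux of the same shape. $(P,Q)$ semistandard: row strict and $P_1-Q_1\le\dots\le P_r-Q_r$. $\iota(P,Q)$ = rows of $(Q,P)$ in reversed order. BRSK: a row-strict $P$ is semistandard on $b$ if $P^{<b}$ (entries $\ge b$ deleted) has weakly decreasing row lengths and weakly increasing columns; $P\xleftarrow{b}a$ ($a<b$): remove entries $\ge b$, row-insert $a$ (append at the end of a row if larger than all its entries and stop; else replace the smallest entry $\ge a$ and insert the replaced entry into the next row; a row below the last is empty; the last added box is the new box), then restore the removed entries at the right ends of their rows. For negative $U=\{(a_1,b_1),\dots,(a_t,b_t)\}$ listed with $b_1\ge\dots\ge b_t$ and $a_i\ge a_{i+1}$ when $b_i=b_{i+1}$: from the empty pair, $P^{(i+1)}=P^{(i)}\xleftarrow{b_{i+1}}a_{i+1}$, and $b_{i+1}$ is placed at the left end of row $j$ of $Q^{(i)}$, $j$ the row of the new box; $\mathrm{BRSK}(U)=(P^{(t)},Q^{(t)})$. For positive $U$, $\mathrm{BRSK}(U)=\iota(\mathrm{BRSK}(\iota U))$; for nonvanishing $U$, $\mathrm{BRSK}(U)$ has the rows of $\mathrm{BRSK}(U^-)$ followed by the rows of $\mathrm{BRSK}(U^+)$. *)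

theory Defs
  imports Main "HOL-Library.Multiset" "HOL-Library.Product_Lexorder"
begin

definition mset_le :: "nat multiset \<Rightarrow> nat multiset \<Rightarrow> bool" where
  "mset_le A B \<longleftrightarrow> size A = size B \<and>
     list_all2 (\<le>) (sorted_list_of_multiset A) (sorted_list_of_multiset B)"

text \<open>"A - C \<le> B - D" means A + D \<le> B + C (disjoint union).\<close>
definition diff_le :: "nat multiset \<Rightarrow> nat multiset \<Rightarrow> nat multiset \<Rightarrow> nat multiset \<Rightarrow> bool" where
  "diff_le A C B D \<longleftrightarrow> mset_le (A + D) (B + C)"

text \<open>For multisets U, V on N^2: U \<le> V iff U_(1) - U_(2) \<le> V_(1) - V_(2).\<close>
definition pair_le :: "(nat \<times> nat) multiset \<Rightarrow> (nat \<times> nat) multiset \<Rightarrow> bool" where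
  "pair_le U V \<longleftrightarrow> diff_le (image_mset fst U) (image_mset snd U) (image_mset fst V) (image_mset snd V)"

definition negative_pairs :: "(nat \<times> nat) set \<Rightarrow> bool" where
  "negative_pairs S \<longleftrightarrow> (\<forall>(a,b)\<in>S. a < b)"

definition positive_pairs :: "(nat \<times> nat) set \<Rightarrow> bool" where
  "positive_pairs S \<longleftrightarrow> (\<forall>(a,b)\<in>S. a > b)"

definition nonvanishing_pairs :: "(nat \<times> nat) set \<Rightarrow> bool" where
  "nonvanishing_pairs S \<longleftrightarrow> (\<forall>(a,b)\<in>S. a \<noteq> b)"

definition is_chain :: "(nat \<times> nat) set \<Rightarrow> bool" where
  "is_chain C \<longleftrightarrow> finite C \<and> C \<noteq> {} \<and>
     (\<forall>p\<in>C. \<forall>q\<in>C. p \<noteq> q \<longrightarrow>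
        (fst p < fst q \<and> snd p > snd q) \<or> (fst q < fst p \<and> snd q > snd p))"

definition mset_bounded_by ::
  "(nat \<times> nat) set \<Rightarrow> (nat \<times> nat) set \<Rightarrow> (nat \<times> nat) multiset \<Rightarrow> bool" where
  "mset_bounded_by T W U \<longleftrightarrow> U \<noteq> {#} \<and>
     (\<forall>C. is_chain C \<and> C \<subseteq> set_mset U \<longrightarrow>
        pair_le (mset_set T) (mset_set C) \<and> pair_le (mset_set C) (mset_set W))"

text \<open>A notched tableau is a list of rows (lists of naturals, left to right);
  a notched bitableau is a pair of notched tableaux of the same shape.\<close>
type_synonym tableau = "nat list list"
type_synonym bitableau = "tableau \<times> tableau"

definition bitab_bounded_by ::
  "(nat \<times> nat) set \<Rightarrow> (nat \<times> nat) set \<Rightarrow> bitableau \<Rightarrow> bool" where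
  "bitab_bounded_by T W PQ \<longleftrightarrow>
     (let P = fst PQ; Q = snd PQ in
       diff_le (image_mset fst (mset_set T)) (image_mset snd (mset_set T))
               (mset (hd P)) (mset (hd Q)) \<and>
       diff_le (mset (last P)) (mset (last Q))
               (image_mset fst (mset_set W)) (image_mset snd (mset_set W)))"

definition iota_bitab :: "bitableau \<Rightarrow> bitableau" where
  "iota_bitab PQ = (rev (snd PQ), rev (fst PQ))"

text \<open>Ordinary row insertion of a into a tableau; returns the new tableau and the
  (0-based) row index of the new box.\<close>
fun row_insert :: "tableau \<Rightarrow> nat \<Rightarrow> tableau \<times> nat" where
  "row_insert [] a = ([[a]], 0)"
| "row_insert (r # rs) a =
     (case filter (\<lambda>x. a \<le> x) r of
        [] \<Rightarrow> ((r @ [a]) # rs, 0)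
      | y # _ \<Rightarrow> (let (rs', j) = row_insert rs y
                 in ((map (\<lambda>x. if x = y then a else x) r) # rs', Suc j)))"

fun restore_rows :: "tableau \<Rightarrow> tableau \<Rightarrow> tableau" where
  "restore_rows [] ss = []"
| "restore_rows (r # rs) [] = r # rs"
| "restore_rows (r # rs) (s # ss) = (r @ s) # restore_rows rs ss"

definition brsk_insert :: "nat \<Rightarrow> tableau \<Rightarrow> nat \<Rightarrow> tableau \<times> nat" where
  "brsk_insert b P a =
     (let (P', j) = row_insert (map (filter (\<lambda>x. x < b)) P) a
      in (restore_rows P' (map (filter (\<lambda>x. b \<le> x)) P), j))"

definition place_left :: "tableau \<Rightarrow> nat \<Rightarrow> nat \<Rightarrow> tableau" where
  "place_left Q j b = (if j < length Q then Q[j := b # Q ! j] else Q @ [[b]])"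

definition brsk_step :: "bitableau \<Rightarrow> nat \<times> nat \<Rightarrow> bitableau" where
  "brsk_step PQ ba =
     (let (b, a) = ba; (P', j) = brsk_insert b (fst PQ) a
      in (P', place_left (snd PQ) j b))"

text \<open>Negative U listed with b weakly decreasing, and a weakly decreasing for equal b:
  the lexicographically decreasing list of the pairs (b,a).\<close>
definition brsk_neg :: "(nat \<times> nat) multiset \<Rightarrow> bitableau" where
  "brsk_neg U = foldl brsk_step ([], []) (rev (sorted_list_of_multiset (image_mset prod.swap U)))"

definition brsk_pos :: "(nat \<times> nat) multiset \<Rightarrow> bitableau" where
  "brsk_pos U = iota_bitab (brsk_neg (image_mset prod.swap U))"

definition brsk :: "(nat \<times> nat) multiset \<Rightarrow> bitableau" where
  "brsk U =
     (let N = brsk_neg (filter_mset (\<lambda>(a,b). a < b) U);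
          Pp = brsk_pos (filter_mset (\<lambda>(a,b). a > b) U)
      in (fst N @ fst Pp, snd N @ snd Pp))"

end

theory Submission
  imports Defs
begin

text \<open>
  For equal-size multisets of naturals, A \<le> B means that B has at least as many entries \<ge> t
  as A, for every t; so both claimed inequalities are counting inequalities.

  Every BRSK insertion puts an entry smaller than b into some row of P and b into the same row
  of Q, hence each row of P is dominated by the corresponding row of Q. For the first row,
  split the insertions at b \<ge> t. Afterwards Q_1 consists of entries \<ge> t, and the entries of
  P_1 below t are outnumbered by a chain of inserted pairs (a, b) with a < t \<le> b; the later
  insertions, all with b < t, change neither count above t. Chain boundedness by T then yields
  T_(1) - T_(2) \<le> P_1 - Q_1. If U has no negative part, P_1 and Q_1 are the last rows of Q and P
  of BRSK(\<iota>U^+), and row dominance together with the negativity of T suffices.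
  The bound at the last row follows from the symmetry BRSK(\<iota>U) = \<iota>(BRSK(U)), which exchanges
  the roles of T and W.
\<close>

section \<open>Dominance by counting\<close>

definition count_ge :: "nat \<Rightarrow> nat multiset \<Rightarrow> nat" where
  "count_ge t A = size {#x \<in># A. t \<le> x#}"

definition count_less :: "nat \<Rightarrow> nat multiset \<Rightarrow> nat" where
  "count_less t A = size {#x \<in># A. x < t#}"

lemma count_ge_empty [simp]: "count_ge t {#} = 0"
  by (simp add: count_ge_def)

lemma count_ge_add_mset [simp]:
  "count_ge t (add_mset x A) = (if t \<le> x then Suc (count_ge t A) else count_ge t A)"
  by (simp add: count_ge_def)

lemma count_ge_union [simp]: "count_ge t (A + B) = count_ge t A + count_ge t B"
  by (simp add: count_ge_def)

lemma count_less_empty [simp]: "count_less t {#} = 0"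
  by (simp add: count_less_def)

lemma count_less_add_mset [simp]:
  "count_less t (add_mset x A) = (if x < t then Suc (count_less t A) else count_less t A)"
  by (simp add: count_less_def)

lemma count_less_union [simp]: "count_less t (A + B) = count_less t A + count_less t B"
  by (simp add: count_less_def)

lemma count_ge_plus_count_less: "count_ge t A + count_less t A = size A"
  by (induction A) auto

lemma count_ge_eq_size: "\<forall>x\<in>#A. t \<le> x \<Longrightarrow> count_ge t A = size A"
  by (induction A) auto

lemma count_ge_eq_0: "\<forall>x\<in>#A. x < t \<Longrightarrow> count_ge t A = 0"
  by (induction A) auto

lemma count_less_eq_0: "\<forall>x\<in>#A. t \<le> x \<Longrightarrow> count_less t A = 0"
  by (induction A) auto

lemma count_less_mono: "\<forall>x\<in>#A. x < u \<longrightarrow> x < v \<Longrightarrow> count_less u A \<le> count_less v A"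
  by (induction A) auto

lemma count_ge_image_mset_le:
  "\<forall>x\<in>#A. f x \<le> x \<Longrightarrow> count_ge t (image_mset f A) \<le> count_ge t A"
  by (induction A) auto

lemma count_ge_split:
  "count_ge t {#x \<in># A. x < b#} + count_ge t {#x \<in># A. b \<le> x#} = count_ge t A"
  by (induction A) auto

lemma count_ge_sorted_list_of_multiset:
  "count_ge t A = length (filter ((\<le>) t) (sorted_list_of_multiset A))"
  by (metis count_ge_def mset_filter mset_sorted_list_of_multiset size_mset)

lemma length_filter_ge_mono:
  fixes xs ys :: "nat list"
  shows "list_all2 (\<le>) xs ys \<Longrightarrow> length (filter ((\<le>) t) xs) \<le> length (filter ((\<le>) t) ys)"
  by (induction rule: list_all2_induct) (auto intro: le_trans)

lemma length_filter_ge_nth_sorted: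
  fixes xs :: "nat list"
  assumes "sorted xs" "i < length xs"
  shows "length xs - i \<le> length (filter ((\<le>) (xs ! i)) xs)"
proof -
  have "{i..<length xs} \<subseteq> {j. j < length xs \<and> xs ! i \<le> xs ! j}"
    using assms by (auto simp: sorted_iff_nth_mono)
  then have "card {i..<length xs} \<le> card {j. j < length xs \<and> xs ! i \<le> xs ! j}"
    by (intro card_mono) auto
  then show ?thesis by (simp add: length_filter_conv_card)
qed

lemma length_filter_ge_sorted_le:
  fixes ys :: "nat list"
  assumes "sorted ys" "i < length ys" "ys ! i < t"
  shows "length (filter ((\<le>) t) ys) \<le> length ys - Suc i"
proof -
  have "{j. j < length ys \<and> t \<le> ys ! j} \<subseteq> {Suc i..<length ys}"
  proof
    fix j assume j: "j \<in> {j. j < length ys \<and> t \<le> ys ! j}"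
    have "\<not> j \<le> i"
    proof
      assume "j \<le> i"
      then have "ys ! j \<le> ys ! i" using assms(1,2) by (simp add: sorted_iff_nth_mono)
      then show False using assms(3) j by simp
    qed
    then show "j \<in> {Suc i..<length ys}" using j by auto
  qed
  then have "card {j. j < length ys \<and> t \<le> ys ! j} \<le> card {Suc i..<length ys}"
    by (intro card_mono) auto
  then show ?thesis by (simp add: length_filter_conv_card)
qed

lemma mset_le_iff_count_ge:
  "mset_le A B \<longleftrightarrow> size A = size B \<and> (\<forall>t. count_ge t A \<le> count_ge t B)"
proof
  assume "mset_le A B"
  then show "size A = size B \<and> (\<forall>t. count_ge t A \<le> count_ge t B)"
    by (simp add: mset_le_def count_ge_sorted_list_of_multiset length_filter_ge_mono)
next
  assume counts: "size A = size B \<and> (\<forall>t. count_ge t A \<le> count_ge t B)"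
  define xs where "xs = sorted_list_of_multiset A"
  define ys where "ys = sorted_list_of_multiset B"
  have len: "length xs = length ys"
    using counts by (metis xs_def ys_def mset_sorted_list_of_multiset size_mset)
  have "xs ! i \<le> ys ! i" if i: "i < length xs" for i
  proof (rule ccontr)
    assume "\<not> xs ! i \<le> ys ! i"
    have "length xs - i \<le> length (filter ((\<le>) (xs ! i)) xs)"
      using i by (simp add: xs_def length_filter_ge_nth_sorted)
    also have "\<dots> \<le> length (filter ((\<le>) (xs ! i)) ys)"
      using counts by (simp add: xs_def ys_def flip: count_ge_sorted_list_of_multiset)
    also have "\<dots> \<le> length ys - Suc i"
      using i len \<open>\<not> xs ! i \<le> ys ! i\<close> by (intro length_filter_ge_sorted_le) (auto simp: ys_def)
    finally show False using i len by simp
  qed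
  then show "mset_le A B"
    using counts len by (simp add: mset_le_def list_all2_conv_all_nth xs_def ys_def)
qed

lemma diff_le_iff_count_ge:
  "diff_le A C B D \<longleftrightarrow> size A + size D = size B + size C \<and>
     (\<forall>t. count_ge t A + count_ge t D \<le> count_ge t B + count_ge t C)"
  by (simp add: diff_le_def mset_le_iff_count_ge)

lemma diff_le_swap: "diff_le A C B D \<longleftrightarrow> diff_le D B C A"
  by (simp add: diff_le_def add.commute)

lemma diff_le_if_mset_le:
  assumes "mset_le A C" "mset_le D B"
  shows "diff_le A C B D"
proof -
  have "count_ge t A + count_ge t D \<le> count_ge t C + count_ge t B" for t
    using assms by (intro add_mono) (auto simp: mset_le_iff_count_ge)
  then show ?thesis
    using assms by (simp add: diff_le_iff_count_ge mset_le_iff_count_ge add.commute)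
qed

lemma count_ge_image_mset_set:
  "finite S \<Longrightarrow> count_ge t (image_mset f (mset_set S)) = card {p \<in> S. t \<le> f p}"
  by (simp add: count_ge_def filter_mset_image_mset)

lemma mset_le_fst_snd_if_negative:
  assumes "finite T" "negative_pairs T"
  shows "mset_le (image_mset fst (mset_set T)) (image_mset snd (mset_set T))"
  using assms by (auto simp: mset_le_iff_count_ge count_ge_image_mset_set negative_pairs_def
      intro!: card_mono)

section \<open>Row dominance under insertion\<close>

definition row :: "tableau \<Rightarrow> nat \<Rightarrow> nat list" where
  "row P i = (if i < length P then P ! i else [])"

lemma row_Nil [simp]: "row [] i = []"
  by (simp add: row_def)

lemma row_Cons_0 [simp]: "row (r # rs) 0 = r"
  by (simp add: row_def)

lemma row_Cons_Suc [simp]: "row (r # rs) (Suc i) = row rs i"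
  by (simp add: row_def)

lemma row_map [simp]: "row (map (filter g) P) i = filter g (row P i)"
  by (simp add: row_def)

lemma row_0_eq_hd: "P \<noteq> [] \<Longrightarrow> row P 0 = hd P"
  by (cases P) auto

lemma row_last: "P \<noteq> [] \<Longrightarrow> row P (length P - 1) = last P"
  by (simp add: row_def last_conv_nth)

lemma length_row_insert:
  "row_insert P a = (P', j) \<Longrightarrow> length P' = length P + (if j = length P then 1 else 0) \<and> j \<le> length P"
proof (induction P arbitrary: a P' j)
  case (Cons r rs)
  show ?case
  proof (cases "filter (\<lambda>x. a \<le> x) r")
    case (Cons y ys)
    obtain rs' j' where "row_insert rs y = (rs', j')" by fastforce
    then show ?thesis using Cons Cons.IH Cons.prems by (auto split: if_splits)
  qed (use Cons.prems in auto)
qed auto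

text \<open>Bumping replaces an entry by a smaller one, and the only new entry, in row j, is
  smaller than b.\<close>
lemma row_row_insert:
  assumes "row_insert P a = (P', j)" "a < b" "\<forall>r\<in>set P. \<forall>x\<in>set r. x < b"
  shows "count_ge t (mset (row P' i)) \<le> count_ge t (mset (row P i)) + (if i = j \<and> t \<le> b then 1 else 0)
    \<and> length (row P' i) = length (row P i) + (if i = j then 1 else 0)"
  using assms
proof (induction P arbitrary: a P' j i)
  case Nil then show ?case by (cases i) (auto simp: row_def)
next
  case (Cons r rs)
  show ?case
  proof (cases "filter (\<lambda>x. a \<le> x) r")
    case Nil then show ?thesis using Cons.prems by (cases i) auto
  next
    case (Cons y ys)
    obtain rs' j' where rec: "row_insert rs y = (rs', j')" by fastforce
    have "y \<in> set (filter (\<lambda>x. a \<le> x) r)" using Cons by simp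
    then have y: "y \<in> set r" "a \<le> y" by simp_all
    have P': "P' = map (\<lambda>x. if x = y then a else x) r # rs'" "j = Suc j'"
      using Cons.prems Cons rec by auto
    show ?thesis
    proof (cases i)
      case 0
      have "count_ge t (mset (map (\<lambda>x. if x = y then a else x) r)) \<le> count_ge t (mset r)"
        unfolding mset_map by (rule count_ge_image_mset_le) (use y in auto)
      then show ?thesis using P' 0 by simp
    next
      case (Suc k)
      have "y < b" "\<forall>r\<in>set rs. \<forall>x\<in>set r. x < b" using Cons.prems(3) y by auto
      from Cons.IH[OF rec this] show ?thesis using P' Suc by simp
    qed
  qed
qed

lemma length_restore_rows: "length S \<le> length P \<Longrightarrow> length (restore_rows P S) = length P"
  by (induction P S rule: restore_rows.induct) auto

lemma row_restore_rows: "length S \<le> length P \<Longrightarrow> row (restore_rows P S) i = row P i @ row S i"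
proof (induction P S arbitrary: i rule: restore_rows.induct)
  case (3 r rs s ss)
  then show ?case by (cases i) auto
qed auto

lemma brsk_insert_shape:
  assumes "brsk_insert b P a = (P', j)" "a < b"
  shows "length P' = length P + (if j = length P then 1 else 0)" "j \<le> length P"
    "count_ge t (mset (row P' i)) \<le> count_ge t (mset (row P i)) + (if i = j \<and> t \<le> b then 1 else 0)"
    "length (row P' i) = length (row P i) + (if i = j then 1 else 0)"
proof -
  obtain P1 j1 where ins: "row_insert (map (filter (\<lambda>x. x < b)) P) a = (P1, j1)" by fastforce
  have P': "P' = restore_rows P1 (map (filter (\<lambda>x. b \<le> x)) P)" "j = j1"
    using assms(1) ins by (auto simp: brsk_insert_def)
  note len = length_row_insert[OF ins]
  have short: "length (map (filter (\<lambda>x. b \<le> x)) P) \<le> length P1" using len by simp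
  show "length P' = length P + (if j = length P then 1 else 0)" "j \<le> length P"
    using len P' length_restore_rows[OF short] by auto
  have low: "count_ge t (mset (row P1 i)) \<le> count_ge t (mset (filter (\<lambda>x. x < b) (row P i)))
      + (if i = j \<and> t \<le> b then 1 else 0)
    \<and> length (row P1 i) = length (filter (\<lambda>x. x < b) (row P i)) + (if i = j then 1 else 0)"
    using row_row_insert[OF ins assms(2), of t i] P' by auto
  have "row P' i = row P1 i @ filter (\<lambda>x. b \<le> x) (row P i)"
    using P' row_restore_rows[OF short] by simp
  moreover have "length (filter (\<lambda>x. x < b) (row P i)) + length (filter (\<lambda>x. b \<le> x) (row P i))
      = length (row P i)"
    using sum_length_filter_compl[of "\<lambda>x. x < b" "row P i"] by (simp add: not_less)
  ultimately show
    "count_ge t (mset (row P' i)) \<le> count_ge t (mset (row P i)) + (if i = j \<and> t \<le> b then 1 else 0)"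
    "length (row P' i) = length (row P i) + (if i = j then 1 else 0)"
    using low count_ge_split[where A = "mset (row P i)" and t = t and b = b] by simp_all
qed

lemma length_place_left:
  "j \<le> length Q \<Longrightarrow> length (place_left Q j b) = length Q + (if j = length Q then 1 else 0)"
  by (auto simp: place_left_def)

lemma row_place_left:
  "j \<le> length Q \<Longrightarrow> row (place_left Q j b) i = (if i = j then b # row Q i else row Q i)"
  by (auto simp: place_left_def row_def nth_append)

definition rows_dominated :: "bitableau \<Rightarrow> bool" where
  "rows_dominated PQ \<longleftrightarrow> length (fst PQ) = length (snd PQ) \<and>
     (\<forall>i. mset_le (mset (row (fst PQ) i)) (mset (row (snd PQ) i)))"

lemma rows_dominated_empty: "rows_dominated ([], [])"
  by (simp add: rows_dominated_def mset_le_def)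

lemma rows_dominated_brsk_step:
  assumes "rows_dominated (P, Q)" "a < b"
  shows "rows_dominated (brsk_step (P, Q) (b, a))" "fst (brsk_step (P, Q) (b, a)) \<noteq> []"
proof -
  obtain P' j where ins: "brsk_insert b P a = (P', j)" by fastforce
  note shape = brsk_insert_shape[OF ins assms(2)]
  have step: "brsk_step (P, Q) (b, a) = (P', place_left Q j b)"
    using ins by (simp add: brsk_step_def)
  have len: "length P = length Q" using assms(1) by (simp add: rows_dominated_def)
  then have j: "j \<le> length Q" using shape(2) by simp
  have "mset_le (mset (row P' i)) (mset (row (place_left Q j b) i))" for i
  proof -
    have "mset_le (mset (row P i)) (mset (row Q i))"
      using assms(1) by (simp add: rows_dominated_def)
    then show ?thesis
      using shape(3,4) row_place_left[OF j, of b i]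
      by (fastforce simp: mset_le_iff_count_ge intro: order_trans)
  qed
  then show "rows_dominated (brsk_step (P, Q) (b, a))"
    using step shape(1) length_place_left[OF j] len by (simp add: rows_dominated_def)
  show "fst (brsk_step (P, Q) (b, a)) \<noteq> []"
    using step shape(1,2) by auto
qed

lemma rows_dominated_foldl_brsk_step:
  "rows_dominated PQ \<Longrightarrow> \<forall>(b, a)\<in>set L. a < b \<Longrightarrow>
   rows_dominated (foldl brsk_step PQ L) \<and> (L \<noteq> [] \<longrightarrow> fst (foldl brsk_step PQ L) \<noteq> [])"
proof (induction L arbitrary: PQ)
  case (Cons ba L)
  obtain P Q b a where PQ: "PQ = (P, Q)" and ba: "ba = (b, a)" by fastforce
  then have "rows_dominated (brsk_step PQ ba)" "fst (brsk_step PQ ba) \<noteq> []"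
    using Cons.prems rows_dominated_brsk_step[of P Q a b] by auto
  moreover have "\<forall>(b, a)\<in>set L. a < b" using Cons.prems(2) by simp
  ultimately show ?case
    using Cons.IH[of "brsk_step PQ ba"] by (cases "L = []") simp_all
qed simp

lemma rows_dominated_brsk_neg:
  assumes "\<forall>(a, b)\<in>#V. a < b" "V \<noteq> {#}"
  shows "rows_dominated (brsk_neg V)" "fst (brsk_neg V) \<noteq> []" "snd (brsk_neg V) \<noteq> []"
proof -
  note rows_dominated_empty
  moreover have "\<forall>(b, a)\<in>set (rev (sorted_list_of_multiset (image_mset prod.swap V))). a < b"
    using assms(1) by auto
  moreover have "rev (sorted_list_of_multiset (image_mset prod.swap V)) \<noteq> []"
    using assms(2) by (metis Nil_is_rev_conv image_mset_is_empty_iff mset.simps(1)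
        mset_sorted_list_of_multiset)
  ultimately show dom: "rows_dominated (brsk_neg V)" and ne: "fst (brsk_neg V) \<noteq> []"
    using rows_dominated_foldl_brsk_step unfolding brsk_neg_def by blast+
  show "snd (brsk_neg V) \<noteq> []"
    using dom ne by (auto simp: rows_dominated_def)
qed

lemma rows_dominated_last:
  assumes "rows_dominated (P, Q)" "P \<noteq> []"
  shows "mset_le (mset (last P)) (mset (last Q))"
proof -
  have len: "length P = length Q" using assms(1) by (simp add: rows_dominated_def)
  have "mset_le (mset (row P (length P - 1))) (mset (row Q (length Q - 1)))"
    using assms(1) len by (simp add: rows_dominated_def)
  moreover have "Q \<noteq> []" using assms(2) len by auto
  ultimately show ?thesis
    using assms(2) by (metis row_last)
qed

section \<open>The first row\<close>

text \<open>The first rows of brsk_step depend only on the first rows: an entry bumped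
  out of row 1 never comes back, and b enters Q_1 exactly when nothing is bumped.\<close>
definition first_row_step :: "nat list \<times> nat list \<Rightarrow> nat \<times> nat \<Rightarrow> nat list \<times> nat list" where
  "first_row_step RS ba = (case RS of (R, S) \<Rightarrow> case ba of (b, a) \<Rightarrow>
     (case filter (\<lambda>x. a \<le> x) (filter (\<lambda>x. x < b) R) of
        [] \<Rightarrow> (filter (\<lambda>x. x < b) R @ [a] @ filter (\<lambda>x. b \<le> x) R, b # S)
      | y # _ \<Rightarrow> (map (\<lambda>x. if x = y then a else x) (filter (\<lambda>x. x < b) R)
                   @ filter (\<lambda>x. b \<le> x) R, S)))"

lemma first_row_brsk_step:
  assumes "length P = length Q"
  shows "(row (fst (brsk_step (P, Q) (b, a))) 0, row (snd (brsk_step (P, Q) (b, a))) 0)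
    = first_row_step (row P 0, row Q 0) (b, a)"
proof (cases P)
  case Nil
  then show ?thesis using assms
    by (simp add: brsk_step_def brsk_insert_def place_left_def first_row_step_def)
next
  case (Cons r rs)
  then obtain q qs where Q: "Q = q # qs" using assms by (cases Q) auto
  show ?thesis
  proof (cases "filter (\<lambda>x. a \<le> x) (filter (\<lambda>x. x < b) r)")
    case Nil
    then show ?thesis using Cons Q
      by (simp add: brsk_step_def brsk_insert_def place_left_def first_row_step_def)
  next
    case (Cons y ys)
    obtain rs' j where "row_insert (map (filter (\<lambda>x. x < b)) rs) y = (rs', j)" by fastforce
    then show ?thesis using Cons \<open>P = r # rs\<close> Q
      by (simp add: brsk_step_def brsk_insert_def place_left_def first_row_step_def)
  qed
qed

lemma first_row_foldl_brsk_step: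
  "rows_dominated PQ \<Longrightarrow> \<forall>(b, a)\<in>set L. a < b \<Longrightarrow>
   (row (fst (foldl brsk_step PQ L)) 0, row (snd (foldl brsk_step PQ L)) 0)
   = foldl first_row_step (row (fst PQ) 0, row (snd PQ) 0) L"
proof (induction L arbitrary: PQ)
  case (Cons ba L)
  obtain P Q b a where PQ: "PQ = (P, Q)" and ba: "ba = (b, a)" by fastforce
  then have "rows_dominated (brsk_step PQ ba)" "length P = length Q"
    using Cons.prems rows_dominated_brsk_step[of P Q a b] by (auto simp: rows_dominated_def)
  then show ?case
    using Cons.IH[of "brsk_step PQ ba"] Cons.prems(2) first_row_brsk_step[of P Q b a] PQ ba
    by simp
qed simp

lemma sorted_filter_less_append_filter_ge:
  "sorted_wrt (<) R \<Longrightarrow> filter (\<lambda>x. x < b) R @ filter (\<lambda>x. (b::nat) \<le> x) R = R"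
proof (induction R)
  case (Cons x R)
  show ?case
  proof (cases "x < b")
    case False
    then have "\<forall>z\<in>set R. b \<le> z" using Cons.prems by auto
    then have "filter (\<lambda>x. x < b) R = []" "filter (\<lambda>x. b \<le> x) R = R"
      by (auto simp: filter_empty_conv)
    then show ?thesis using False by auto
  qed (use Cons in auto)
qed simp

lemma first_row_step_cases:
  assumes "sorted_wrt (<) R" "a < b"
  obtains (append) r W where "R = r @ W" "fst (first_row_step (R, S) (b, a)) = r @ a # W"
      "snd (first_row_step (R, S) (b, a)) = b # S" "\<forall>x\<in>set r. x < a" "\<forall>x\<in>set W. b \<le> x"
  | (bump) us y vs W where "R = us @ y # vs @ W" "fst (first_row_step (R, S) (b, a)) = us @ a # vs @ W"
      "snd (first_row_step (R, S) (b, a)) = S" "\<forall>x\<in>set us. x < a" "a \<le> y" "y < b"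
      "\<forall>x\<in>set vs. x < b" "\<forall>x\<in>set W. b \<le> x"
proof (cases "filter (\<lambda>x. a \<le> x) (filter (\<lambda>x. x < b) R)")
  case Nil
  then show ?thesis
    using sorted_filter_less_append_filter_ge[OF assms(1), of b]
    by (intro append[of "filter (\<lambda>x. x < b) R" "filter (\<lambda>x. b \<le> x) R"])
      (auto simp: first_row_step_def filter_empty_conv)
next
  case (Cons y ys)
  obtain us vs where split: "filter (\<lambda>x. x < b) R = us @ y # vs" "\<forall>u\<in>set us. \<not> a \<le> u" "a \<le> y"
    using filter_eq_ConsD[OF Cons] by blast
  have "\<forall>x\<in>set (filter (\<lambda>x. x < b) R). x < b" by simp
  then have below: "\<forall>x\<in>set (us @ y # vs). x < b" unfolding split(1) .
  have "sorted_wrt (<) (us @ y # vs)" using split(1) assms(1) by (metis sorted_wrt_filter)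
  then have "map (\<lambda>x. if x = y then a else x) us = us" "map (\<lambda>x. if x = y then a else x) vs = vs"
    using split by (auto intro!: map_idI simp: sorted_wrt_append)
  then have "fst (first_row_step (R, S) (b, a)) = us @ a # vs @ filter (\<lambda>x. b \<le> x) R"
    using Cons split by (simp add: first_row_step_def del: filter_filter)
  moreover have "snd (first_row_step (R, S) (b, a)) = S" using Cons by (simp add: first_row_step_def)
  moreover have "R = us @ y # vs @ filter (\<lambda>x. b \<le> x) R"
    using sorted_filter_less_append_filter_ge[OF assms(1), of b] split by simp
  ultimately show ?thesis using split below by (intro bump) auto
qed

lemma sorted_first_row_step:
  assumes "sorted_wrt (<) R" "a < b"
  shows "sorted_wrt (<) (fst (first_row_step (R, S) (b, a)))"
  using assms
proof (cases rule: first_row_step_cases[where S = S])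
  case (append r W)
  then show ?thesis using assms by (fastforce simp: sorted_wrt_append)
next
  case (bump us y vs W)
  have "sorted_wrt (<) (us @ y # vs @ W)" using bump assms(1) by simp
  moreover from this have "\<forall>x\<in>set vs. y < x" by (simp add: sorted_wrt_append)
  then have "\<forall>x\<in>set vs. a < x" using bump(5) by fastforce
  ultimately show ?thesis using bump by (fastforce simp: sorted_wrt_append)
qed

lemma length_first_row_step:
  assumes "sorted_wrt (<) R" "a < b"
  shows "length (fst (first_row_step (R, S) (b, a))) + length S
      = length R + length (snd (first_row_step (R, S) (b, a)))
    \<and> set (snd (first_row_step (R, S) (b, a))) \<subseteq> insert b (set S)"
  using assms by (cases rule: first_row_step_cases[where S = S]) auto

lemma is_chain_insert:
  assumes "is_chain C" "\<forall>p\<in>C. fst p < a \<and> b < snd p"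
  shows "is_chain (insert (a, b) C)" "card (insert (a, b) C) = Suc (card C)"
proof -
  have "(a, b) \<notin> C" using assms(2) by auto
  then show "is_chain (insert (a, b) C)" "card (insert (a, b) C) = Suc (card C)"
    using assms by (auto simp: is_chain_def)
qed

text \<open>A Greene-type invariant for the first row while the pairs with b \<ge> t are inserted:
  the entries below u \<le> t are outnumbered by a chain of inserted pairs (a, b) with a < u and
  t \<le> b. Since at that stage every entry of Q_1 is \<ge> t, the case u = t bounds the
  excess of Q_1 over P_1 above t by the size of such a chain.\<close>
definition chain_witnessed :: "nat \<Rightarrow> (nat \<times> nat) set \<Rightarrow> nat list \<Rightarrow> bool" where
  "chain_witnessed t X R \<longleftrightarrow> (\<forall>u\<le>t. 0 < count_less u (mset R) \<longrightarrow>
     (\<exists>C. is_chain C \<and> C \<subseteq> X \<and> count_less u (mset R) \<le> card C \<and> (\<forall>p\<in>C. fst p < u \<and> t \<le> snd p)))"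

lemma chain_witness_extend:
  assumes J: "chain_witnessed t X R"
    and X: "\<forall>p\<in>X. b \<le> snd p \<and> (snd p = b \<longrightarrow> a \<le> fst p)"
    and "t \<le> b" "a < u" "u \<le> t"
    and below: "\<forall>x\<in>set R. x < u \<longrightarrow> x < a"
  shows "\<exists>C. is_chain C \<and> C \<subseteq> insert (a, b) X \<and> Suc (count_less u (mset R)) \<le> card C
    \<and> (\<forall>p\<in>C. fst p < u \<and> t \<le> snd p)"
proof (cases "count_less u (mset R) = 0")
  case True
  then show ?thesis using assms by (intro exI[of _ "{(a, b)}"]) (auto simp: is_chain_def)
next
  case False
  have less: "count_less u (mset R) \<le> count_less a (mset R)"
    using below by (intro count_less_mono) simp
  moreover have "a \<le> t" using assms(4,5) by simp
  ultimately obtain C where C: "is_chain C" "C \<subseteq> X" "count_less a (mset R) \<le> card C"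
      "\<forall>p\<in>C. fst p < a \<and> t \<le> snd p"
    using J False unfolding chain_witnessed_def by fastforce
  have "b < snd p" if "p \<in> C" for p
    using C(2,4) X that by (metis le_neq_implies_less not_le subsetD)
  then have "\<forall>p\<in>C. fst p < a \<and> b < snd p" using C(4) by blast
  then show ?thesis
    using C less is_chain_insert[OF C(1)] assms(3,4)
    by (intro exI[of _ "insert (a, b) C"]) auto
qed

lemma count_less_first_row_step:
  assumes sorted: "sorted_wrt (<) R" and "a < b" "u \<le> b"
  shows "count_less u (mset (fst (first_row_step (R, S) (b, a)))) = count_less u (mset R)
    \<or> count_less u (mset (fst (first_row_step (R, S) (b, a)))) = Suc (count_less u (mset R))
      \<and> a < u \<and> (\<forall>x\<in>set R. x < u \<longrightarrow> x < a)"
  using sorted \<open>a < b\<close>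
proof (cases rule: first_row_step_cases[where S = S])
  case (append r W)
  have "count_less u (mset W) = 0" using append(5) \<open>u \<le> b\<close> by (intro count_less_eq_0) auto
  moreover have "\<forall>x\<in>set R. x < u \<longrightarrow> x < a" using append \<open>u \<le> b\<close> by fastforce
  ultimately show ?thesis using append(1,2) by (cases "a < u") auto
next
  case (bump us y vs W)
  have W: "count_less u (mset W) = 0" using bump(8) \<open>u \<le> b\<close> by (intro count_less_eq_0) auto
  have "\<forall>x\<in>set vs. y < x" using sorted bump(1) by (simp add: sorted_wrt_append)
  show ?thesis
  proof (cases "a < u \<and> \<not> y < u")
    case True
    have "\<forall>x\<in>set R. x < u \<longrightarrow> x < a"
      using bump(1,4,8) True \<open>\<forall>x\<in>set vs. y < x\<close> \<open>u \<le> b\<close> by fastforce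
    then show ?thesis using bump(1,2) W True by auto
  next
    case False
    then show ?thesis using bump(1,2,5) W by auto
  qed
qed

lemma chain_witnessed_first_row_step:
  assumes "sorted_wrt (<) R" "a < b" "t \<le> b" and J: "chain_witnessed t X R"
    and X: "\<forall>p\<in>X. b \<le> snd p \<and> (snd p = b \<longrightarrow> a \<le> fst p)"
  shows "chain_witnessed t (insert (a, b) X) (fst (first_row_step (R, S) (b, a)))"
  unfolding chain_witnessed_def
proof (intro allI impI)
  fix u assume u: "u \<le> t" and pos: "0 < count_less u (mset (fst (first_row_step (R, S) (b, a))))"
  have "u \<le> b" using u assms(3) by simp
  then consider
      "count_less u (mset (fst (first_row_step (R, S) (b, a)))) = count_less u (mset R)"
    | "count_less u (mset (fst (first_row_step (R, S) (b, a)))) = Suc (count_less u (mset R))"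
      "a < u" "\<forall>x\<in>set R. x < u \<longrightarrow> x < a"
    using count_less_first_row_step[OF assms(1,2)] by blast
  then show "\<exists>C. is_chain C \<and> C \<subseteq> insert (a, b) X
      \<and> count_less u (mset (fst (first_row_step (R, S) (b, a)))) \<le> card C
      \<and> (\<forall>p\<in>C. fst p < u \<and> t \<le> snd p)"
  proof cases
    case 1
    then show ?thesis using J u pos unfolding chain_witnessed_def by fastforce
  next
    case 2
    then show ?thesis using chain_witness_extend[OF J X assms(3) _ u] by simp
  qed
qed

definition first_row_invariant :: "nat \<Rightarrow> (nat \<times> nat) set \<Rightarrow> nat list \<times> nat list \<Rightarrow> bool" where
  "first_row_invariant t X RS \<longleftrightarrow> sorted_wrt (<) (fst RS) \<and> length (fst RS) = length (snd RS) \<and>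
     (\<forall>s\<in>set (snd RS). t \<le> s) \<and> chain_witnessed t X (fst RS)"

lemma first_row_invariant_foldl:
  "sorted_wrt (\<ge>) L \<Longrightarrow> \<forall>(b, a)\<in>set L. a < b \<and> t \<le> b \<Longrightarrow>
   first_row_invariant t (prod.swap ` set L) (foldl first_row_step ([], []) L)"
proof (induction L rule: rev_induct)
  case Nil
  then show ?case by (simp add: first_row_invariant_def chain_witnessed_def)
next
  case (snoc ba L)
  obtain b a where ba: "ba = (b, a)" by fastforce
  obtain R S where RS: "foldl first_row_step ([], []) L = (R, S)" by fastforce
  have inv: "first_row_invariant t (prod.swap ` set L) (R, S)"
    using snoc RS by (simp add: sorted_wrt_append)
  have "a < b" "t \<le> b" using snoc.prems ba by auto
  have "\<forall>q\<in>set L. (b, a) \<le> q" using snoc.prems(1) ba by (simp add: sorted_wrt_append)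
  then have X: "\<forall>p\<in>prod.swap ` set L. b \<le> snd p \<and> (snd p = b \<longrightarrow> a \<le> fst p)"
    by fastforce
  have sorted: "sorted_wrt (<) R" using inv by (simp add: first_row_invariant_def)
  have "chain_witnessed t (insert (a, b) (prod.swap ` set L)) (fst (first_row_step (R, S) (b, a)))"
    using inv X \<open>a < b\<close> \<open>t \<le> b\<close> sorted
    by (intro chain_witnessed_first_row_step) (auto simp: first_row_invariant_def)
  then show ?case
    using RS ba inv sorted_first_row_step[OF sorted \<open>a < b\<close>] \<open>t \<le> b\<close>
      length_first_row_step[OF sorted \<open>a < b\<close>, of S]
    by (auto simp: first_row_invariant_def)
qed

lemma count_ge_first_row_step:
  assumes "a < b" "b < t"
  shows "count_ge t (mset (fst (first_row_step RS (b, a)))) = count_ge t (mset (fst RS))"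
    and "count_ge t (mset (snd (first_row_step RS (b, a)))) = count_ge t (mset (snd RS))"
proof -
  obtain R S where RS: "RS = (R, S)" by fastforce
  have small: "count_ge t (mset (filter (\<lambda>x. x < b) R)) = 0"
    using assms by (intro count_ge_eq_0) auto
  have "count_ge t (mset R) = count_ge t (mset (filter (\<lambda>x. b \<le> x) R))"
    using count_ge_split[where A = "mset R" and t = t and b = b] small by simp
  moreover have "count_ge t (mset (map (\<lambda>x. if x = y then a else x) (filter (\<lambda>x. x < b) R))) = 0" for y
    using assms by (intro count_ge_eq_0) auto
  ultimately show "count_ge t (mset (fst (first_row_step RS (b, a)))) = count_ge t (mset (fst RS))"
    and "count_ge t (mset (snd (first_row_step RS (b, a)))) = count_ge t (mset (snd RS))"
    using small assms RS
    by (auto simp: first_row_step_def split: list.split simp del: filter_filter mset_filter)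
qed

lemma count_ge_foldl_first_row_step:
  "\<forall>(b, a)\<in>set L. a < b \<and> b < t \<Longrightarrow>
   count_ge t (mset (fst (foldl first_row_step RS L))) = count_ge t (mset (fst RS))
   \<and> count_ge t (mset (snd (foldl first_row_step RS L))) = count_ge t (mset (snd RS))"
  by (induction L arbitrary: RS) (auto simp: count_ge_first_row_step)

lemma first_row_invariant_excess_chain:
  assumes "first_row_invariant t X (R, S)"
  obtains "count_ge t (mset S) \<le> count_ge t (mset R)"
  | C where "is_chain C" "C \<subseteq> X" "\<forall>(a, b)\<in>C. a < t \<and> t \<le> b"
      "count_ge t (mset S) \<le> count_ge t (mset R) + card C"
proof -
  have excess: "count_ge t (mset S) = count_ge t (mset R) + count_less t (mset R)"
    using assms count_ge_eq_size[of "mset S" t] count_ge_plus_count_less[of t "mset R"]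
    by (simp add: first_row_invariant_def)
  show thesis
  proof (cases "count_less t (mset R) = 0")
    case True
    then show thesis using that(1) excess by simp
  next
    case False
    then obtain C where "is_chain C" "C \<subseteq> X" "count_less t (mset R) \<le> card C"
        "\<forall>p\<in>C. fst p < t \<and> t \<le> snd p"
      using assms unfolding first_row_invariant_def chain_witnessed_def by auto
    then show thesis using that(2) excess by fastforce
  qed
qed

lemma hd_brsk_neg:
  assumes "\<forall>(a, b)\<in>#V. a < b" "V \<noteq> {#}"
  shows "(hd (fst (brsk_neg V)), hd (snd (brsk_neg V)))
    = foldl first_row_step ([], []) (rev (sorted_list_of_multiset (image_mset prod.swap V)))"
proof -
  have "\<forall>(b, a)\<in>set (rev (sorted_list_of_multiset (image_mset prod.swap V))). a < b"
    using assms(1) by auto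
  then have "(row (fst (brsk_neg V)) 0, row (snd (brsk_neg V)) 0)
      = foldl first_row_step ([], []) (rev (sorted_list_of_multiset (image_mset prod.swap V)))"
    using first_row_foldl_brsk_step[OF rows_dominated_empty] by (simp add: brsk_neg_def)
  then show ?thesis
    using rows_dominated_brsk_neg(2,3)[OF assms] by (simp add: row_0_eq_hd)
qed

lemma dropWhile_sorted_wrt_ge:
  fixes f :: "'a \<Rightarrow> 'b::linorder"
  shows "sorted_wrt (\<ge>) (map f xs) \<Longrightarrow> x \<in> set (dropWhile (\<lambda>x. t \<le> f x) xs) \<Longrightarrow> f x < t"
  by (induction xs) (auto split: if_splits dest: order.strict_trans2)

lemma brsk_neg_hd_excess_chain:
  fixes V :: "(nat \<times> nat) multiset"
  assumes neg: "\<forall>(a, b)\<in>#V. a < b" and "V \<noteq> {#}"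
  obtains "count_ge t (mset (hd (snd (brsk_neg V)))) \<le> count_ge t (mset (hd (fst (brsk_neg V))))"
  | C where "is_chain C" "C \<subseteq> set_mset V" "\<forall>(a, b)\<in>C. a < t \<and> t \<le> b"
      "count_ge t (mset (hd (snd (brsk_neg V)))) \<le> count_ge t (mset (hd (fst (brsk_neg V)))) + card C"
proof -
  define L where "L = rev (sorted_list_of_multiset (image_mset prod.swap V))"
  define L1 where "L1 = takeWhile (\<lambda>(b, a). t \<le> b) L"
  define L2 where "L2 = dropWhile (\<lambda>(b, a). t \<le> b) L"
  obtain R S where RS: "foldl first_row_step ([], []) L1 = (R, S)" by fastforce
  have L: "L = L1 @ L2" "set L = prod.swap ` set_mset V" "sorted_wrt (\<ge>) L"
    by (simp_all add: L1_def L2_def L_def sorted_wrt_rev)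
  have "sorted_wrt (\<ge>) (map fst L)"
    using L(3) unfolding sorted_wrt_map by (rule sorted_wrt_mono_rel[rotated]) (auto simp: less_eq_prod_def)
  moreover have "\<forall>(b, a)\<in>set L. a < b" using neg L(2) by auto
  ultimately have L1: "\<forall>(b, a)\<in>set L1. a < b \<and> t \<le> b" and L2: "\<forall>(b, a)\<in>set L2. a < b \<and> b < t"
    using dropWhile_sorted_wrt_ge[of fst L _ t]
    by (auto simp: L1_def L2_def case_prod_unfold dest: set_takeWhileD set_dropWhileD)
  have inv: "first_row_invariant t (prod.swap ` set L1) (R, S)"
    using first_row_invariant_foldl[OF _ L1] L(1,3) RS by (simp add: sorted_wrt_append)
  have "(hd (fst (brsk_neg V)), hd (snd (brsk_neg V))) = foldl first_row_step (R, S) L2"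
    using hd_brsk_neg[OF assms] L(1) RS by (simp add: L_def)
  then have "count_ge t (mset (hd (fst (brsk_neg V)))) = count_ge t (mset R)"
      "count_ge t (mset (hd (snd (brsk_neg V)))) = count_ge t (mset S)"
    using count_ge_foldl_first_row_step[OF L2, of "(R, S)"] by (simp_all add: prod_eq_iff)
  moreover have "set L1 \<subseteq> prod.swap ` set_mset V" using L(1,2) by auto
  then have "prod.swap ` set L1 \<subseteq> set_mset V" by force
  ultimately show thesis
    using that by (cases rule: first_row_invariant_excess_chain[OF inv]) auto
qed

lemma brsk_neg_hd_diff_le:
  fixes V :: "(nat \<times> nat) multiset"
  assumes "\<forall>(a, b)\<in>#V. a < b" "V \<noteq> {#}" "mset_le A B"
    and chains: "\<And>C. is_chain C \<Longrightarrow> C \<subseteq> set_mset V \<Longrightarrow>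
      diff_le A B (image_mset fst (mset_set C)) (image_mset snd (mset_set C))"
  shows "diff_le A B (mset (hd (fst (brsk_neg V)))) (mset (hd (snd (brsk_neg V))))"
proof -
  let ?P = "mset (hd (fst (brsk_neg V)))" and ?Q = "mset (hd (snd (brsk_neg V)))"
  have "mset_le (mset (row (fst (brsk_neg V)) 0)) (mset (row (snd (brsk_neg V)) 0))"
    using rows_dominated_brsk_neg[OF assms(1,2)] by (simp add: rows_dominated_def)
  then have "mset_le ?P ?Q"
    using rows_dominated_brsk_neg[OF assms(1,2)] by (simp add: row_0_eq_hd)
  have "count_ge t A + count_ge t ?Q \<le> count_ge t ?P + count_ge t B" for t
  proof (cases rule: brsk_neg_hd_excess_chain[OF assms(1,2), of t])
    case 1
    then show ?thesis using assms(3) by (simp add: mset_le_iff_count_ge add_mono add.commute)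
  next
    case (2 C)
    have "finite C" using 2(1) by (simp add: is_chain_def)
    then have "\<forall>x\<in>#image_mset snd (mset_set C). t \<le> x" "\<forall>x\<in>#image_mset fst (mset_set C). x < t"
      using 2(3) by (auto simp: case_prod_unfold)
    then have "count_ge t (image_mset snd (mset_set C)) = card C"
      "count_ge t (image_mset fst (mset_set C)) = 0"
      by (simp_all add: count_ge_eq_size count_ge_eq_0)
    moreover have "count_ge t A + count_ge t (image_mset snd (mset_set C))
        \<le> count_ge t (image_mset fst (mset_set C)) + count_ge t B"
      using chains[OF 2(1,2)] by (simp add: diff_le_iff_count_ge)
    ultimately show ?thesis using 2(4) by simp
  qed
  then show ?thesis
    using assms(3) \<open>mset_le ?P ?Q\<close> by (simp add: diff_le_iff_count_ge mset_le_iff_count_ge)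
qed

section \<open>Bounds for BRSK\<close>

lemma brsk_image_mset_swap: "brsk (image_mset prod.swap U) = iota_bitab (brsk U)"
  by (simp add: brsk_def brsk_pos_def iota_bitab_def Let_def filter_mset_image_mset case_prod_unfold
      multiset.map_comp comp_def)

lemma pair_le_image_mset_swap:
  "pair_le (image_mset prod.swap X) (image_mset prod.swap Y) \<longleftrightarrow> pair_le Y X"
  by (simp add: pair_le_def multiset.map_comp comp_def diff_le_swap)

lemma brsk_hd_diff_le:
  assumes "finite T" "negative_pairs T" "nonvanishing_pairs (set_mset U)" "U \<noteq> {#}"
    and bounded: "\<forall>C. is_chain C \<and> C \<subseteq> set_mset U \<longrightarrow> pair_le (mset_set T) (mset_set C)"
  shows "diff_le (image_mset fst (mset_set T)) (image_mset snd (mset_set T))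
    (mset (hd (fst (brsk U)))) (mset (hd (snd (brsk U))))"
proof -
  define N where "N = brsk_neg (filter_mset (\<lambda>(a, b). a < b) U)"
  define N' where "N' = brsk_neg (image_mset prod.swap (filter_mset (\<lambda>(a, b). a > b) U))"
  have brsk: "brsk U = (fst N @ rev (snd N'), snd N @ rev (fst N'))"
    by (simp add: brsk_def brsk_pos_def iota_bitab_def Let_def N_def N'_def)
  have T: "mset_le (image_mset fst (mset_set T)) (image_mset snd (mset_set T))"
    using assms(1,2) by (rule mset_le_fst_snd_if_negative)
  show ?thesis
  proof (cases "filter_mset (\<lambda>(a, b). a < b) U = {#}")
    case False
    have "diff_le (image_mset fst (mset_set T)) (image_mset snd (mset_set T))
        (mset (hd (fst N))) (mset (hd (snd N)))"
      unfolding N_def using False T bounded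
      by (intro brsk_neg_hd_diff_le) (auto simp: pair_le_def)
    then show ?thesis
      using rows_dominated_brsk_neg[of "filter_mset (\<lambda>(a, b). a < b) U"] False
      by (simp add: brsk N_def)
  next
    case True
    obtain p where p: "p \<in># U" using assms(4) by blast
    then have "\<not> fst p < snd p" "fst p \<noteq> snd p"
      using True assms(3) by (auto simp: nonvanishing_pairs_def filter_mset_eq_conv case_prod_unfold)
    then have "p \<in># filter_mset (\<lambda>(a, b). a > b) U"
      using p by (cases p) simp
    then have "filter_mset (\<lambda>(a, b). a > b) U \<noteq> {#}" by auto
    moreover have "\<forall>(a, b)\<in>#image_mset prod.swap (filter_mset (\<lambda>(a, b). a > b) U). a < b" by auto
    ultimately have "rows_dominated N'" "fst N' \<noteq> []"
      unfolding N'_def using rows_dominated_brsk_neg by simp_all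
    then have "mset_le (mset (last (fst N'))) (mset (last (snd N')))"
      by (metis prod.collapse rows_dominated_last)
    moreover have "N = ([], [])" unfolding N_def True by (simp add: brsk_neg_def)
    ultimately show ?thesis
      using diff_le_if_mset_le[OF T] by (simp add: brsk hd_rev)
  qed
qed

lemma is_chain_image_swap: "is_chain C \<Longrightarrow> is_chain (prod.swap ` C)"
  by (auto simp: is_chain_def)

lemma mset_set_image_swap: "mset_set (prod.swap ` A) = image_mset prod.swap (mset_set A)"
  by (simp add: image_mset_mset_set)

lemma brsk_last_diff_le:
  assumes "finite W" "positive_pairs W" "nonvanishing_pairs (set_mset U)" "U \<noteq> {#}"
    and bounded: "\<forall>C. is_chain C \<and> C \<subseteq> set_mset U \<longrightarrow> pair_le (mset_set C) (mset_set W)"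
  shows "diff_le (mset (last (fst (brsk U)))) (mset (last (snd (brsk U))))
    (image_mset fst (mset_set W)) (image_mset snd (mset_set W))"
proof -
  have "diff_le (image_mset fst (mset_set (prod.swap ` W))) (image_mset snd (mset_set (prod.swap ` W)))
    (mset (hd (fst (brsk (image_mset prod.swap U))))) (mset (hd (snd (brsk (image_mset prod.swap U)))))"
  proof (rule brsk_hd_diff_le)
    show "finite (prod.swap ` W)" using assms(1) by simp
    show "negative_pairs (prod.swap ` W)"
      using assms(2) by (auto simp: negative_pairs_def positive_pairs_def)
    show "nonvanishing_pairs (set_mset (image_mset prod.swap U))"
      using assms(3) by (auto simp: nonvanishing_pairs_def)
    show "image_mset prod.swap U \<noteq> {#}" using assms(4) by simp
    show "\<forall>C. is_chain C \<and> C \<subseteq> set_mset (image_mset prod.swap U) \<longrightarrow>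
        pair_le (mset_set (prod.swap ` W)) (mset_set C)"
    proof (intro allI impI)
      fix C assume C: "is_chain C \<and> C \<subseteq> set_mset (image_mset prod.swap U)"
      then have "pair_le (mset_set (prod.swap ` C)) (mset_set W)"
        using bounded is_chain_image_swap by force
      then show "pair_le (mset_set (prod.swap ` W)) (mset_set C)"
        using pair_le_image_mset_swap[of "mset_set W" "mset_set (prod.swap ` C)"]
        by (simp add: mset_set_image_swap multiset.map_comp comp_def)
    qed
  qed
  then show ?thesis
    by (simp add: brsk_image_mset_swap iota_bitab_def hd_rev mset_set_image_swap multiset.map_comp
        comp_def diff_le_swap)
qed

theorem lemma7p2:
  fixes T W :: "(nat \<times> nat) set" and U :: "(nat \<times> nat) multiset"
  assumes "finite T" and "\<forall>(a,b)\<in>T. 0 < a \<and> 0 < b" and "negative_pairs T"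
      and "finite W" and "\<forall>(a,b)\<in>W. 0 < a \<and> 0 < b" and "positive_pairs W"
      and "\<forall>(a,b)\<in>set_mset U. 0 < a \<and> 0 < b"
      and "nonvanishing_pairs (set_mset U)" and "U \<noteq> {#}"
      and "mset_bounded_by T W U"
  shows "bitab_bounded_by T W (brsk U)"
proof -
  have "\<forall>C. is_chain C \<and> C \<subseteq> set_mset U \<longrightarrow> pair_le (mset_set T) (mset_set C)"
    and "\<forall>C. is_chain C \<and> C \<subseteq> set_mset U \<longrightarrow> pair_le (mset_set C) (mset_set W)"
    using assms(10) by (simp_all add: mset_bounded_by_def)
  then show ?thesis
    using brsk_hd_diff_le[OF assms(1,3,8,9)] brsk_last_diff_le[OF assms(4,6,8,9)]
    by (simp add: bitab_bounded_by_def)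
qed

end
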